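(* Let $(p_\omega)_{\omega\in\Omega}$ be a fixed probability distribution on the finite scenario set $\Omega$, and $\Phi_N(\mathbf{x})=\sum_{\omega\in\Omega}p_\omega Q_\omega(\mathbf{x})$. Let $\hat{\mathbf{x}}\in\mathcal{X}$ and for each $\omega\in\Omega$ let $\hat{\mathbf{S}}^\omega=(\hat S^\omega_1,\dots,\hat S^\omega_k)$ be an optimal solution of the problem defining $Q_\omega(\hat{\mathbf{x}})$. For each $\omega,q$ fix an ordering $\hat S^\omega_q=\{i^\omega_{q,1},\dots,i^\omega_{q,T^\omega_q}\}$ and for $1\le t\le T^\omega_q$ let $\hat{\mathbf{S}}^\omega_{q,(t)}=(\hat S^\omega_1,\dots,\hat S^\omega_{q-1},\{i^\omega_{q,1},\dots,i^\omega_{q,t-1}\},\emptyset,\dots,\emptyset)$. Then for every $\mathbf{x}\in\mathcal{X}$, $$\Phi_N(\mathbf{x})\;\ge\;\Phi_N(\hat{\mathbf{x}})-\sum_{q=1}^k\sum_{\omega\in\Omega}\sum_{t=1}^{T^\omega_q}p_\omega\,\rho^\omega_{q,i^\omega_{q,t}}(\hat{\mathbf{S}}^\omega_{q,(t)})\,\xi^\omega_{i^\omega_{q,t}}\,x_{q,i^\omega_{q,t}}.$$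
   Context: Let $n,k$ be positive integers and $N=\{1,\dots,n\}$. $\mathbb{X}(N,k)$ denotes the set of $k$-tuples $\mathbf{S}=(S_1,\dots,S_k)$ of pairwise disjoint subsets of $N$; such a tuple is identified with $\mathbf{s}\in\{0,1\}^{kn}$ where $s_{q,i}=1$ iff $i\in S_q$. For $\mathbf{X},\mathbf{Y}\in\mathbb{X}(N,k)$ let $\mathbf{X}\sqcap\mathbf{Y}=(X_1\cap Y_1,\dots,X_k\cap Y_k)$ and $\mathbf{X}\sqcup\mathbf{Y}$ be the tuple whose $i$-th component is $(X_i\cup Y_i)\setminus\bigcup_{q\ne i}(X_q\cup Y_q)$. A function $f:\mathbb{X}(N,k)\to\mathbb{R}$ is $k$-submodular if $f(\mathbf{X})+f(\mathbf{Y})\ge f(\mathbf{X}\sqcap\mathbf{Y})+f(\mathbf{X}\sqcup\mathbf{Y})$ for all $\mathbf{X},\mathbf{Y}$, and monotone if $f(\mathbf{X})\le f(\mathbf{Y})$ whenever $X_q\subseteq Y_q$ for all $q$. $\boldsymbol{\emptyset}=(\emptyset,\dots,\emptyset)$. Given nonnegative integer budgets $A_1,\dots,A_k$ and $D_1,\dots,D_k$, the attacker's feasible set is $\mathcal{X}=\{\mathbf{x}\in\{0,1\}^{kn}:\sum_{i=1}^n x_{q,i}\le A_q\ \forall q,\ \sum_{q=1}^k x_{q,i}\le 1\ \forall i\in N\}$. Stochastic setting: $\Omega$ is a finite set of scenarios; for each $\omega\in\Omega$ we are given $\xi^\omega\in\{0,1\}^n$ and a monotone $k$-submodular function $f^\omega:\mathbb{X}(N,k)\to\mathbb{R}$,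 with marginal gains $\rho^\omega_{q,i}(\mathbf{X})=f^\omega(X_1,\dots,X_q\cup\{i\},\dots,X_k)-f^\omega(\mathbf{X})$ for $i\notin\bigcup_r X_r$. For $\mathbf{x}\in\mathcal{X}$, $Q_\omega(\mathbf{x})=\max\{f^\omega(\mathbf{S}):\mathbf{S}\in\mathbb{X}(N,k),\ s_{q,i}\le 1-x_{q,i}\xi^\omega_i\ \forall q,i,\ \sum_{i=1}^n s_{q,i}\le D_q\ \forall q\}$. *)

theory Defs
  imports Complex_Main
begin

text \<open>A k-tuple of pairwise disjoint subsets of N = {1..n} is a function
  S :: nat \<Rightarrow> nat set with components S 1, ..., S k (and S q = {} for
  q outside {1..k}, so that tuples have a canonical representation).
  Element i belongs to component q iff s_{q,i} = 1.\<close>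

definition ktuples :: "nat \<Rightarrow> nat \<Rightarrow> (nat \<Rightarrow> nat set) set" where
  "ktuples n k = {S. (\<forall>q\<in>{1..k}. S q \<subseteq> {1..n}) \<and> (\<forall>q. q \<notin> {1..k} \<longrightarrow> S q = {})
     \<and> (\<forall>p\<in>{1..k}. \<forall>q\<in>{1..k}. p \<noteq> q \<longrightarrow> S p \<inter> S q = {})}"

definition kmeet :: "(nat \<Rightarrow> nat set) \<Rightarrow> (nat \<Rightarrow> nat set) \<Rightarrow> (nat \<Rightarrow> nat set)" where
  "kmeet X Y = (\<lambda>q. X q \<inter> Y q)"

definition kjoin :: "nat \<Rightarrow> (nat \<Rightarrow> nat set) \<Rightarrow> (nat \<Rightarrow> nat set) \<Rightarrow> (nat \<Rightarrow> nat set)" where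
  "kjoin k X Y = (\<lambda>q. (X q \<union> Y q) - (\<Union>r\<in>{1..k} - {q}. X r \<union> Y r))"

definition k_submodular :: "nat \<Rightarrow> nat \<Rightarrow> ((nat \<Rightarrow> nat set) \<Rightarrow> real) \<Rightarrow> bool" where
  "k_submodular n k f = (\<forall>X\<in>ktuples n k. \<forall>Y\<in>ktuples n k.
      f X + f Y \<ge> f (kmeet X Y) + f (kjoin k X Y))"

definition k_monotone :: "nat \<Rightarrow> nat \<Rightarrow> ((nat \<Rightarrow> nat set) \<Rightarrow> real) \<Rightarrow> bool" where
  "k_monotone n k f = (\<forall>X\<in>ktuples n k. \<forall>Y\<in>ktuples n k.
      (\<forall>q\<in>{1..k}. X q \<subseteq> Y q) \<longrightarrow> f X \<le> f Y)"

definition marg :: "((nat \<Rightarrow> nat set) \<Rightarrow> real) \<Rightarrow> nat \<Rightarrow> nat \<Rightarrow> (nat \<Rightarrow> nat set) \<Rightarrow> real" where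
  "marg f q i X = f (X(q := insert i (X q))) - f X"

definition attacker_feasible :: "nat \<Rightarrow> nat \<Rightarrow> (nat \<Rightarrow> nat) \<Rightarrow> (nat \<Rightarrow> nat \<Rightarrow> real) \<Rightarrow> bool" where
  "attacker_feasible n k A x = ((\<forall>q\<in>{1..k}. \<forall>i\<in>{1..n}. x q i \<in> {0, 1})
     \<and> (\<forall>q\<in>{1..k}. (\<Sum>i=1..n. x q i) \<le> real (A q))
     \<and> (\<forall>i\<in>{1..n}. (\<Sum>q=1..k. x q i) \<le> 1))"

definition defender_feasible :: "nat \<Rightarrow> nat \<Rightarrow> (nat \<Rightarrow> nat) \<Rightarrow> (nat \<Rightarrow> real)
    \<Rightarrow> (nat \<Rightarrow> nat \<Rightarrow> real) \<Rightarrow> (nat \<Rightarrow> nat set) set" where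
  "defender_feasible n k D xi x = {S \<in> ktuples n k.
      (\<forall>q\<in>{1..k}. \<forall>i\<in>{1..n}. (if i \<in> S q then 1 else 0) \<le> 1 - x q i * xi i)
      \<and> (\<forall>q\<in>{1..k}. card (S q) \<le> D q)}"

definition Qval :: "nat \<Rightarrow> nat \<Rightarrow> (nat \<Rightarrow> nat) \<Rightarrow> ((nat \<Rightarrow> nat set) \<Rightarrow> real) \<Rightarrow> (nat \<Rightarrow> real)
    \<Rightarrow> (nat \<Rightarrow> nat \<Rightarrow> real) \<Rightarrow> real" where
  "Qval n k D f xi x = Max (f ` defender_feasible n k D xi x)"

definition Phi :: "'w set \<Rightarrow> ('w \<Rightarrow> real) \<Rightarrow> nat \<Rightarrow> nat \<Rightarrow> (nat \<Rightarrow> nat)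
    \<Rightarrow> ('w \<Rightarrow> (nat \<Rightarrow> nat set) \<Rightarrow> real) \<Rightarrow> ('w \<Rightarrow> nat \<Rightarrow> real) \<Rightarrow> (nat \<Rightarrow> nat \<Rightarrow> real) \<Rightarrow> real" where
  "Phi \<Omega> p n k D f xi x = (\<Sum>\<omega>\<in>\<Omega>. p \<omega> * Qval n k D (f \<omega>) (xi \<omega>) x)"

definition prefix_tuple :: "(nat \<Rightarrow> nat set) \<Rightarrow> (nat \<Rightarrow> nat) \<Rightarrow> nat \<Rightarrow> nat \<Rightarrow> (nat \<Rightarrow> nat set)" where
  "prefix_tuple S ord q t = (\<lambda>r. if r < q then S r else if r = q then ord ` {1..<t} else {})"

end

theory Submission
  imports Defs
begin

text \<open>Against an attack x, the defender can keep the optimal response \<open>Shat\<^sup>\<omega>\<close> to \<open>xhat\<close>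
  minus the elements that x attacks and that are exposed in scenario \<omega>; this restricted
  tuple is feasible for x, so \<open>Q\<^sub>\<omega>(x)\<close> is at least its value. Removing the attacked elements
  one at a time along the orderings of the components, the loss of each removal is bounded by
  the marginal gain of that element at its prefix tuple: k-submodularity gives diminishing
  returns, and the restricted tuples lie componentwise below the prefix tuples. Summing the
  telescoping bounds and averaging over the scenarios gives the claim.\<close>

definition restrict_ktuple :: "(nat \<Rightarrow> nat set) \<Rightarrow> (nat \<Rightarrow> nat set) \<Rightarrow> nat \<Rightarrow> nat set" where
  "restrict_ktuple X K = (\<lambda>r. X r \<inter> K r)"

definition lower_tuple :: "(nat \<Rightarrow> nat set) \<Rightarrow> nat \<Rightarrow> nat \<Rightarrow> nat set" where
  "lower_tuple S q = (\<lambda>r. if r < q then S r else {})"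

lemma ktuples_subset:
  assumes "S \<in> ktuples n k" "\<forall>r. X r \<subseteq> S r"
  shows "X \<in> ktuples n k"
  using assms unfolding ktuples_def by blast

lemma restrict_ktuple_in_ktuples: "S \<in> ktuples n k \<Longrightarrow> restrict_ktuple S K \<in> ktuples n k"
  by (rule ktuples_subset) (auto simp: restrict_ktuple_def)

lemma ktuples_insert:
  assumes "X \<in> ktuples n k" "q \<in> {1..k}" "i \<in> {1..n}" "\<forall>r. i \<notin> X r"
  shows "X(q := insert i (X q)) \<in> ktuples n k"
  using assms unfolding ktuples_def by auto

lemma finite_ktuple_component:
  assumes "S \<in> ktuples n k"
  shows "finite (S q)"
proof (cases "q \<in> {1..k}")
  case True
  then have "S q \<subseteq> {1..n}" using assms unfolding ktuples_def by blast
  then show ?thesis using finite_subset by blast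
next
  case False
  then show ?thesis using assms unfolding ktuples_def by simp
qed

lemma finite_ktuples: "finite (ktuples n k)"
proof (rule finite_subset)
  show "ktuples n k \<subseteq> {S. \<forall>r. (r \<in> {1..k} \<longrightarrow> S r \<in> Pow {1..n}) \<and> (r \<notin> {1..k} \<longrightarrow> S r = {})}"
    unfolding ktuples_def by blast
  show "finite {S. \<forall>r. (r \<in> {1..k} \<longrightarrow> S r \<in> Pow {1..n}) \<and> (r \<notin> {1..k} \<longrightarrow> S r = ({}::nat set))}"
    by (rule finite_set_of_finite_funs) auto
qed

lemma finite_defender_feasible: "finite (defender_feasible n k D xi x)"
  unfolding defender_feasible_def using finite_ktuples by simp

lemma marg_antimono:
  assumes sub: "k_submodular n k g" and X: "X \<in> ktuples n k" and Y: "Y \<in> ktuples n k"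
    and XY: "\<forall>r. X r \<subseteq> Y r" and i: "i \<in> {1..n}" and q: "q \<in> {1..k}"
    and fresh: "\<forall>r. i \<notin> Y r"
  shows "marg g q i Y \<le> marg g q i X"
proof -
  let ?Xi = "X(q := insert i (X q))" and ?Yi = "Y(q := insert i (Y q))"
  have Xi: "?Xi \<in> ktuples n k" using ktuples_insert[OF X q i] fresh XY by blast
  have Yi: "?Yi \<in> ktuples n k" using ktuples_insert[OF Y q i fresh] .
  have meet: "kmeet ?Xi Y = X" unfolding kmeet_def using XY fresh by (auto simp: fun_eq_iff)
  have join: "kjoin k ?Xi Y = ?Yi"
  proof
    fix r
    have un: "?Xi s \<union> Y s = ?Yi s" for s using XY by auto
    show "kjoin k ?Xi Y r = ?Yi r"
    proof (cases "r \<in> {1..k}")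
      case True
      then show ?thesis using Yi unfolding kjoin_def un ktuples_def by blast
    next
      case False
      then have "X r = {}" "Y r = {}" "r \<noteq> q" using X Y q unfolding ktuples_def by auto
      then show ?thesis unfolding kjoin_def by auto
    qed
  qed
  have "g (kmeet ?Xi Y) + g (kjoin k ?Xi Y) \<le> g ?Xi + g Y"
    using sub Xi Y unfolding k_submodular_def by blast
  then show ?thesis unfolding marg_def meet join by simp
qed

lemma restrict_loss_insert:
  assumes sub: "k_submodular n k g" and X: "X \<in> ktuples n k"
    and q: "q \<in> {1..k}" and i: "i \<in> {1..n}" and fresh: "\<forall>r. i \<notin> X r"
  shows "g (X(q := insert i (X q))) - g (restrict_ktuple (X(q := insert i (X q))) K)
    \<le> g X - g (restrict_ktuple X K) + (if i \<in> K q then 0 else marg g q i X)"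
proof (cases "i \<in> K q")
  case True
  let ?XK = "restrict_ktuple X K"
  have "restrict_ktuple (X(q := insert i (X q))) K = ?XK(q := insert i (?XK q))"
    using True by (auto simp: restrict_ktuple_def fun_eq_iff)
  moreover have "marg g q i X \<le> marg g q i ?XK"
    using marg_antimono[OF sub restrict_ktuple_in_ktuples[OF X] X _ i q fresh]
    by (auto simp: restrict_ktuple_def)
  ultimately show ?thesis using True by (simp add: marg_def)
next
  case False
  then have "restrict_ktuple (X(q := insert i (X q))) K = restrict_ktuple X K"
    by (auto simp: restrict_ktuple_def fun_eq_iff)
  then show ?thesis using False by (simp add: marg_def)
qed

lemma prefix_tuple_one: "prefix_tuple S h q 1 = lower_tuple S q"
  by (auto simp: prefix_tuple_def lower_tuple_def fun_eq_iff)

lemma prefix_tuple_Suc: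
  "1 \<le> m \<Longrightarrow> prefix_tuple S h q (Suc m)
     = (prefix_tuple S h q m)(q := insert (h m) (prefix_tuple S h q m q))"
  by (auto simp: prefix_tuple_def atLeastLessThanSuc fun_eq_iff)

context
  fixes n k :: nat and S :: "nat \<Rightarrow> nat set" and h :: "nat \<Rightarrow> nat" and q :: nat
  assumes S: "S \<in> ktuples n k" and q: "q \<in> {1..k}"
    and h: "bij_betw h {1..card (S q)} (S q)"
begin

lemma prefix_tuple_last: "prefix_tuple S h q (Suc (card (S q))) = lower_tuple S (Suc q)"
proof
  fix r
  have "h ` {1..<Suc (card (S q))} = S q"
    using h unfolding bij_betw_def by (simp add: atLeastLessThanSuc_atLeastAtMost)
  then show "prefix_tuple S h q (Suc (card (S q))) r = lower_tuple S (Suc q) r"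
    unfolding prefix_tuple_def lower_tuple_def by (cases "r = q") auto
qed

lemma prefix_tuple_in_ktuples:
  assumes "t \<le> Suc (card (S q))"
  shows "prefix_tuple S h q t \<in> ktuples n k"
proof (rule ktuples_subset[OF S], intro allI)
  fix r
  have "h ` {1..<t} \<subseteq> h ` {1..card (S q)}" using assms by auto
  then show "prefix_tuple S h q t r \<subseteq> S r"
    using h unfolding bij_betw_def prefix_tuple_def by auto
qed

lemma prefix_tuple_fresh:
  assumes m: "m \<in> {1..card (S q)}"
  shows "h m \<notin> prefix_tuple S h q m r"
proof -
  have hm: "h m \<in> S q" using h m unfolding bij_betw_def by auto
  have "h m \<notin> h ` {1..<m}"
    using h m unfolding bij_betw_def by (subst inj_on_image_mem_iff) auto
  moreover have "h m \<notin> S r" if "r < q"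
  proof (cases "r = 0")
    case True
    then show ?thesis using S unfolding ktuples_def by simp
  next
    case False
    with that q have "r \<in> {1..k}" "r \<noteq> q" by auto
    then have "S r \<inter> S q = {}" using S q unfolding ktuples_def by blast
    then show ?thesis using hm by blast
  qed
  ultimately show ?thesis unfolding prefix_tuple_def by simp
qed

lemma prefix_chain_loss:
  assumes sub: "k_submodular n k g" and t: "1 \<le> t" "t \<le> Suc (card (S q))"
  shows "g (prefix_tuple S h q t) - g (restrict_ktuple (prefix_tuple S h q t) K)
    \<le> g (lower_tuple S q) - g (restrict_ktuple (lower_tuple S q) K)
      + (\<Sum>s=1..<t. if h s \<in> K q then 0 else marg g q (h s) (prefix_tuple S h q s))"
  using t
proof (induction t rule: dec_induct)
  case base
  then show ?case using prefix_tuple_one[of S h q] by simp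
next
  case (step m)
  let ?P = "prefix_tuple S h q"
  have m: "m \<in> {1..card (S q)}" using step.hyps step.prems by auto
  have "h m \<in> S q" using h m unfolding bij_betw_def by auto
  then have "h m \<in> {1..n}" using S q unfolding ktuples_def by blast
  then have "g (?P (Suc m)) - g (restrict_ktuple (?P (Suc m)) K)
      \<le> g (?P m) - g (restrict_ktuple (?P m) K)
        + (if h m \<in> K q then 0 else marg g q (h m) (?P m))"
    unfolding prefix_tuple_Suc[OF step.hyps(1)]
    using restrict_loss_insert[OF sub prefix_tuple_in_ktuples q] m prefix_tuple_fresh by simp
  then show ?case using step.IH step.prems step.hyps(1) by simp
qed

end

lemma ktuple_restrict_loss:
  assumes sub: "k_submodular n k g" and S: "S \<in> ktuples n k"
    and h: "\<forall>q\<in>{1..k}. bij_betw (h q) {1..card (S q)} (S q)"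
  shows "g S - g (restrict_ktuple S K)
    \<le> (\<Sum>q=1..k. \<Sum>t=1..card (S q).
          if h q t \<in> K q then 0 else marg g q (h q t) (prefix_tuple S (h q) q t))"
proof -
  define F where "F q = (\<Sum>t=1..card (S q).
          if h q t \<in> K q then 0 else marg g q (h q t) (prefix_tuple S (h q) q t))" for q
  have chain: "g (lower_tuple S j) - g (restrict_ktuple (lower_tuple S j) K) \<le> (\<Sum>q=1..<j. F q)"
    if "1 \<le> j" "j \<le> Suc k" for j
    using that
  proof (induction j rule: dec_induct)
    case base
    have "S 0 = {}" using S unfolding ktuples_def by simp
    then have "lower_tuple S 1 = (\<lambda>_. {})" unfolding lower_tuple_def by (auto simp: fun_eq_iff)
    then show ?case by (simp add: restrict_ktuple_def)
  next
    case (step m)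
    then have q: "m \<in> {1..k}" by auto
    have "g (lower_tuple S (Suc m)) - g (restrict_ktuple (lower_tuple S (Suc m)) K)
        \<le> g (lower_tuple S m) - g (restrict_ktuple (lower_tuple S m) K) + F m"
      using prefix_chain_loss[OF S q _ sub, of "h m" "Suc (card (S m))" K] h q
      by (simp add: prefix_tuple_last[OF S q] F_def atLeastLessThanSuc_atLeastAtMost)
    then show ?case using step q by simp
  qed
  moreover have "lower_tuple S (Suc k) = S"
    using S unfolding ktuples_def lower_tuple_def by (auto simp: fun_eq_iff)
  ultimately show ?thesis
    using chain[of "Suc k"] unfolding F_def by (simp add: atLeastLessThanSuc_atLeastAtMost)
qed

lemma restrict_ktuple_defender_feasible:
  assumes S: "S \<in> defender_feasible n k D xi y"
    and x01: "\<forall>q\<in>{1..k}. \<forall>i\<in>{1..n}. x q i \<in> {0, 1}" and xi01: "\<forall>i\<in>{1..n}. xi i \<in> {0, 1}"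
  shows "restrict_ktuple S (\<lambda>r. {i. x r i * xi i = 0}) \<in> defender_feasible n k D xi x"
    (is "?S \<in> _")
proof -
  have Sk: "S \<in> ktuples n k" using S by (simp add: defender_feasible_def)
  have "card (?S q) \<le> D q" if q: "q \<in> {1..k}" for q
  proof -
    have "finite (S q)" using Sk by (rule finite_ktuple_component)
    then have "card (?S q) \<le> card (S q)" unfolding restrict_ktuple_def by (intro card_mono) auto
    also have "\<dots> \<le> D q" using S q by (simp add: defender_feasible_def)
    finally show ?thesis .
  qed
  moreover have "(if i \<in> ?S q then 1 else 0) \<le> 1 - x q i * xi i"
    if "q \<in> {1..k}" "i \<in> {1..n}" for q i
  proof -
    have "x q i \<in> {0, 1}" "xi i \<in> {0, 1}" using x01 xi01 that by auto
    then show ?thesis unfolding restrict_ktuple_def by auto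
  qed
  ultimately show ?thesis
    using restrict_ktuple_in_ktuples[OF Sk] by (simp add: defender_feasible_def)
qed

lemma Qval_attack_bound:
  assumes sub: "k_submodular n k g"
    and S: "S \<in> defender_feasible n k D xi xhat"
    and opt: "\<forall>T\<in>defender_feasible n k D xi xhat. g T \<le> g S"
    and h: "\<forall>q\<in>{1..k}. bij_betw (h q) {1..card (S q)} (S q)"
    and x01: "\<forall>q\<in>{1..k}. \<forall>i\<in>{1..n}. x q i \<in> {0, 1}" and xi01: "\<forall>i\<in>{1..n}. xi i \<in> {0, 1}"
  shows "Qval n k D g xi xhat
      - (\<Sum>q=1..k. \<Sum>t=1..card (S q).
          marg g q (h q t) (prefix_tuple S (h q) q t) * xi (h q t) * x q (h q t))
    \<le> Qval n k D g xi x"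
proof -
  define K where "K r = {i. x r i * xi i = 0}" for r
  have Sk: "S \<in> ktuples n k" using S unfolding defender_feasible_def by blast
  have weights: "(if h q t \<in> K q then 0 else marg g q (h q t) (prefix_tuple S (h q) q t))
      = marg g q (h q t) (prefix_tuple S (h q) q t) * xi (h q t) * x q (h q t)"
    if "q \<in> {1..k}" "t \<in> {1..card (S q)}" for q t
  proof -
    have "h q t \<in> {1..n}" using h Sk that unfolding bij_betw_def ktuples_def by blast
    then have "x q (h q t) \<in> {0, 1}" "xi (h q t) \<in> {0, 1}" using x01 xi01 that by auto
    then show ?thesis unfolding K_def by auto
  qed
  have "Qval n k D g xi xhat = g S"
    unfolding Qval_def using S opt finite_defender_feasible by (intro Max_eqI) auto
  moreover have "g (restrict_ktuple S K) \<le> Qval n k D g xi x"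
    unfolding Qval_def K_def
    using restrict_ktuple_defender_feasible[OF S x01 xi01] finite_defender_feasible
    by (intro Max_ge) auto
  moreover have "g S - g (restrict_ktuple S K)
      \<le> (\<Sum>q=1..k. \<Sum>t=1..card (S q).
          marg g q (h q t) (prefix_tuple S (h q) q t) * xi (h q t) * x q (h q t))"
    using ktuple_restrict_loss[OF sub Sk h, of K] weights by simp
  ultimately show ?thesis by linarith
qed

theorem theorem3:
  fixes n k :: nat and A D :: "nat \<Rightarrow> nat"
    and \<Omega> :: "'w set" and p :: "'w \<Rightarrow> real"
    and f :: "'w \<Rightarrow> (nat \<Rightarrow> nat set) \<Rightarrow> real" and xi :: "'w \<Rightarrow> nat \<Rightarrow> real"
    and xhat x :: "nat \<Rightarrow> nat \<Rightarrow> real"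
    and Shat :: "'w \<Rightarrow> nat \<Rightarrow> nat set" and ord :: "'w \<Rightarrow> nat \<Rightarrow> nat \<Rightarrow> nat"
  assumes "n > 0" and "k > 0"
    and "finite \<Omega>" and "\<forall>\<omega>\<in>\<Omega>. p \<omega> \<ge> 0" and "(\<Sum>\<omega>\<in>\<Omega>. p \<omega>) = 1"
    and "\<forall>\<omega>\<in>\<Omega>. \<forall>i\<in>{1..n}. xi \<omega> i \<in> {0, 1}"
    and "\<forall>\<omega>\<in>\<Omega>. k_monotone n k (f \<omega>) \<and> k_submodular n k (f \<omega>)"
    and "attacker_feasible n k A xhat"
    and "\<forall>\<omega>\<in>\<Omega>. Shat \<omega> \<in> defender_feasible n k D (xi \<omega>) xhat
            \<and> (\<forall>S\<in>defender_feasible n k D (xi \<omega>) xhat. f \<omega> S \<le> f \<omega> (Shat \<omega>))"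
    and "\<forall>\<omega>\<in>\<Omega>. \<forall>q\<in>{1..k}. bij_betw (ord \<omega> q) {1..card (Shat \<omega> q)} (Shat \<omega> q)"
    and "attacker_feasible n k A x"
  shows "Phi \<Omega> p n k D f xi x \<ge> Phi \<Omega> p n k D f xi xhat
     - (\<Sum>q=1..k. \<Sum>\<omega>\<in>\<Omega>. \<Sum>t=1..card (Shat \<omega> q).
          p \<omega> * marg (f \<omega>) q (ord \<omega> q t) (prefix_tuple (Shat \<omega>) (ord \<omega> q) q t)
            * xi \<omega> (ord \<omega> q t) * x q (ord \<omega> q t))"
proof -
  define B where "B \<omega> = (\<Sum>q=1..k. \<Sum>t=1..card (Shat \<omega> q).
      marg (f \<omega>) q (ord \<omega> q t) (prefix_tuple (Shat \<omega>) (ord \<omega> q) q t)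
        * xi \<omega> (ord \<omega> q t) * x q (ord \<omega> q t))" for \<omega>
  have x01: "\<forall>q\<in>{1..k}. \<forall>i\<in>{1..n}. x q i \<in> {0, 1}"
    using assms(11) unfolding attacker_feasible_def by blast
  have "p \<omega> * (Qval n k D (f \<omega>) (xi \<omega>) xhat - B \<omega>) \<le> p \<omega> * Qval n k D (f \<omega>) (xi \<omega>) x"
    if "\<omega> \<in> \<Omega>" for \<omega>
    using that assms(4,6,7,9,10) x01 unfolding B_def
    by (intro mult_left_mono Qval_attack_bound) auto
  then have "Phi \<Omega> p n k D f xi xhat - (\<Sum>\<omega>\<in>\<Omega>. p \<omega> * B \<omega>) \<le> Phi \<Omega> p n k D f xi x"
    unfolding Phi_def by (simp add: sum_subtractf[symmetric] right_diff_distrib sum_mono)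
  moreover have "(\<Sum>\<omega>\<in>\<Omega>. p \<omega> * B \<omega>) = (\<Sum>q=1..k. \<Sum>\<omega>\<in>\<Omega>. \<Sum>t=1..card (Shat \<omega> q).
      p \<omega> * marg (f \<omega>) q (ord \<omega> q t) (prefix_tuple (Shat \<omega>) (ord \<omega> q) q t)
        * xi \<omega> (ord \<omega> q t) * x q (ord \<omega> q t))"
    unfolding B_def by (subst sum.swap) (simp add: sum_distrib_left mult.assoc)
  ultimately show ?thesis by linarith
qed

end
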